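(* Let $M>0$, $\beta^*>0$, and let $g$ be the log-normal density $g(t)=\frac{1}{t\sigma\sqrt{2\pi}}\exp\!\big(-\frac{(\ln t-\mu)^2}{2\sigma^2}\big)$ for $t>0$, $g(t)=0$ for $t\le0$ ($\mu\in\mathbb{R}$, $\sigma>0$). Let $I$ be the unique $C^1$ solution on $[0,\infty)$ of \[ I'(t)=\beta^*(M-I(t))\Big(I(t)-\int_0^t g(t-s)I(s)\,ds\Big),\qquad I(0)=I_0\in[0,M]. \] If $0<I_0<M$, then $I'(t)>0$ for all $t\ge0$; if $I_0=0$ or $I_0=M$, then $I'\equiv 0$. *)

theory Defs
  imports "HOL-Analysis.Analysis"
begin

definition lognormal_density :: "real \<Rightarrow> real \<Rightarrow> real \<Rightarrow> real" where
  "lognormal_density \<mu> \<sigma> t =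
     (if t > 0 then (1 / (t * \<sigma> * sqrt (2 * pi))) * exp (- ((ln t - \<mu>)^2) / (2 * \<sigma>^2))
      else 0)"

end

theory Submission
  imports Defs "HOL-Probability.Distributions" "HOL-Real_Asymp.Real_Asymp"
begin

(* Write the equation as I' = beta (M - I) J with J t = I t - (g * I) t.
   For I0 = 0 and I0 = M, the functions I and M - I satisfy |u'(t)| <= L sup_[0,t] |u|,
   which forces them to vanish identically.  For 0 < I0 < M, Gronwall's inequality keeps
   M - I away from 0, so J = I' / (beta (M - I)) is continuous with J 0 = I0 > 0.  At a
   first zero T of J, I would be strictly increasing on [0, T]; as g is positive with total
   mass at most 1, this gives (g * I) T < I T, i.e. J T > 0, a contradiction.  Hence J > 0
   and therefore I' > 0. *)

lemma has_real_derivative_nonzero_persists: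
  fixes J J' :: "real \<Rightarrow> real"
  assumes "T \<ge> 0" and "L \<ge> 0"
    and deriv: "\<And>t. t \<in> {0..T} \<Longrightarrow> (J has_real_derivative J' t) (at t within {0..T})"
    and bound: "\<And>t. t \<in> {0..T} \<Longrightarrow> \<bar>J' t\<bar> \<le> L * \<bar>J t\<bar>"
    and "J 0 \<noteq> 0"
  shows "J T \<noteq> 0"
proof -
  \<comment> \<open>The bound makes the weighted square nondecreasing.\<close>
  define \<phi> where "\<phi> t = (J t)^2 * exp (2 * L * t)" for t
  define \<phi>' where "\<phi>' t = 2 * exp (2 * L * t) * (J t * J' t + L * (J t)^2)" for t
  have \<phi>_deriv: "(\<phi> has_real_derivative \<phi>' t) (at t within {0..T})" if "t \<in> {0..T}" for t
    unfolding \<phi>_def[abs_def] \<phi>'_def using deriv[OF that]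
    by (auto intro!: derivative_eq_intros simp: power2_eq_square algebra_simps)
  have \<phi>'_nonneg: "\<phi>' t \<ge> 0" if "t \<in> {0..T}" for t
  proof -
    have "- (J t * J' t) \<le> \<bar>J t\<bar> * \<bar>J' t\<bar>"
      by (metis abs_ge_minus_self abs_mult)
    also have "\<dots> \<le> \<bar>J t\<bar> * (L * \<bar>J t\<bar>)"
      by (intro mult_left_mono bound that) auto
    also have "\<dots> = L * (J t)^2"
      by (simp add: power2_eq_square)
    finally show ?thesis
      by (simp add: \<phi>'_def)
  qed
  have "\<phi> 0 \<le> \<phi> T"
  proof (intro DERIV_nonneg_imp_increasing_open[OF \<open>T \<ge> 0\<close>] DERIV_continuous_on[OF \<phi>_deriv])
    fix x assume "0 < x" "x < T"
    then show "\<exists>y. (\<phi> has_real_derivative y) (at x) \<and> y \<ge> 0"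
      using \<phi>_deriv[of x] \<phi>'_nonneg[of x] by (auto simp: at_within_Icc_at)
  qed
  moreover have "\<phi> 0 > 0"
    using \<open>J 0 \<noteq> 0\<close> by (simp add: \<phi>_def)
  ultimately show ?thesis
    by (auto simp: \<phi>_def)
qed

lemma volterra_zero_extend:
  fixes J J' :: "real \<Rightarrow> real"
  assumes "0 \<le> a" "a \<le> b" "b \<le> T" "L \<ge> 0" "L * (b - a) < 1"
    and deriv: "\<And>t. t \<in> {0..T} \<Longrightarrow> (J has_real_derivative J' t) (at t within {0..T})"
    and bound: "\<And>t c. t \<in> {0..T} \<Longrightarrow> (\<And>u. u \<in> {0..t} \<Longrightarrow> \<bar>J u\<bar> \<le> c) \<Longrightarrow> \<bar>J' t\<bar> \<le> L * c"
    and zero: "\<And>s. s \<in> {0..a} \<Longrightarrow> J s = 0"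
  shows "\<forall>s\<in>{0..b}. J s = 0"
proof -
  have "continuous_on {0..b} J"
    by (rule continuous_on_subset[OF DERIV_continuous_on[OF deriv]]) (use \<open>b \<le> T\<close> in auto)
  then have abs_J_cont: "continuous_on {0..b} (\<lambda>x. \<bar>J x\<bar>)"
    by (intro continuous_intros)
  obtain p where p: "p \<in> {0..b}" and p_max: "\<And>y. y \<in> {0..b} \<Longrightarrow> \<bar>J y\<bar> \<le> \<bar>J p\<bar>"
    using continuous_attains_sup[OF compact_Icc _ abs_J_cont] assms(1,2) by auto
  have "J p = 0"
  proof (cases "p \<le> a")
    case False
    have "\<bar>J p - J a\<bar> \<le> (L * \<bar>J p\<bar>) * \<bar>p - a\<bar>"
    proof (rule field_differentiable_bound[where S = "{a..p}", simplified real_norm_def])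
      show "(J has_field_derivative J' z) (at z within {a..p})" if "z \<in> {a..p}" for z
        using that assms p by (intro DERIV_subset[OF deriv]) auto
      show "\<bar>J' z\<bar> \<le> L * \<bar>J p\<bar>" if "z \<in> {a..p}" for z
        using that assms p by (intro bound p_max) auto
    qed (use False in auto)
    also have "\<dots> \<le> (L * \<bar>J p\<bar>) * (b - a)"
      using False p \<open>L \<ge> 0\<close> by (intro mult_left_mono) auto
    finally have "\<bar>J p\<bar> * (1 - L * (b - a)) \<le> 0"
      using zero[of a] assms by (simp add: algebra_simps)
    then show ?thesis
      using \<open>L * (b - a) < 1\<close> by (simp add: mult_le_0_iff)
  qed (use zero p in auto)
  then show ?thesis
    using p_max by fastforce
qed

lemma volterra_zero:
  fixes J J' :: "real \<Rightarrow> real"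
  assumes "T \<ge> 0" and "L \<ge> 0"
    and deriv: "\<And>t. t \<in> {0..T} \<Longrightarrow> (J has_real_derivative J' t) (at t within {0..T})"
    and bound: "\<And>t c. t \<in> {0..T} \<Longrightarrow> (\<And>u. u \<in> {0..t} \<Longrightarrow> \<bar>J u\<bar> \<le> c) \<Longrightarrow> \<bar>J' t\<bar> \<le> L * c"
    and "J 0 = 0"
  shows "J T = 0"
proof -
  define \<delta> where "\<delta> = 1 / (L + 1)"
  have \<delta>: "\<delta> > 0" "L * \<delta> < 1"
    using \<open>L \<ge> 0\<close> by (auto simp: \<delta>_def field_simps)
  have "\<forall>s\<in>{0..min T (real n * \<delta>)}. J s = 0" for n
  proof (induction n)
    case 0
    then show ?case using \<open>J 0 = 0\<close> \<open>T \<ge> 0\<close> by auto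
  next
    case (Suc n)
    have "L * (min T (real (Suc n) * \<delta>) - min T (real n * \<delta>)) \<le> L * \<delta>"
      using \<open>L \<ge> 0\<close> \<delta> by (intro mult_left_mono) (auto simp: algebra_simps)
    then show ?case
      using Suc.IH \<delta> \<open>T \<ge> 0\<close>
      by (intro volterra_zero_extend[OF _ _ _ \<open>L \<ge> 0\<close> _ deriv bound,
            where a = "min T (real n * \<delta>)" and b = "min T (real (Suc n) * \<delta>)"])
         (auto simp: min_le_iff_disj distrib_right)
  qed
  moreover obtain n where "T / \<delta> \<le> real n"
    using real_arch_simple by blast
  then have "T \<le> real n * \<delta>"
    using \<delta> by (simp add: field_simps)
  ultimately show ?thesis
    using \<open>T \<ge> 0\<close> by auto
qed

lemma continuous_pos_induct:
  fixes h :: "real \<Rightarrow> real"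
  assumes cont: "continuous_on {0..} h" and "h 0 > 0"
    and step: "\<And>T. T > 0 \<Longrightarrow> (\<And>s. 0 \<le> s \<Longrightarrow> s < T \<Longrightarrow> h s > 0) \<Longrightarrow> h T > 0"
    and "t \<ge> 0"
  shows "h t > 0"
proof (rule ccontr)
  assume "\<not> h t > 0"
  define Z where "Z = {0..t} \<inter> h -` {..0}"
  have "closed Z"
    unfolding Z_def by (rule continuous_closed_preimage[OF continuous_on_subset[OF cont]]) auto
  moreover have "Z \<noteq> {}" "bdd_below Z"
    using \<open>\<not> h t > 0\<close> \<open>t \<ge> 0\<close> by (auto simp: Z_def)
  ultimately have "Inf Z \<in> Z"
    by (rule closed_contains_Inf[rotated 2])
  then have Z_Inf: "0 \<le> Inf Z" "Inf Z \<le> t" "h (Inf Z) \<le> 0"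
    by (auto simp: Z_def)
  have "h s > 0" if "0 \<le> s" "s < Inf Z" for s
  proof (rule ccontr)
    assume "\<not> h s > 0"
    then have "s \<in> Z"
      using that Z_Inf by (auto simp: Z_def)
    then show False
      using cInf_lower[OF _ \<open>bdd_below Z\<close>] that by fastforce
  qed
  moreover have "Inf Z > 0"
    using Z_Inf \<open>h 0 > 0\<close> by (cases "Inf Z = 0") auto
  ultimately show False
    using step[of "Inf Z"] Z_Inf by auto
qed

lemma abs_integral_convolution_le:
  fixes k f :: "real \<Rightarrow> real"
  assumes "t \<ge> 0"
    and k: "\<And>x. x \<in> {0..t} \<Longrightarrow> \<bar>k x\<bar> \<le> B"
    and f: "\<And>u. u \<in> {0..t} \<Longrightarrow> \<bar>f u\<bar> \<le> c"
  shows "\<bar>integral {0..t} (\<lambda>s. k (t - s) * f s)\<bar> \<le> B * c * t"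
proof -
  have "B \<ge> 0" "c \<ge> 0"
    using k[of 0] f[of 0] \<open>t \<ge> 0\<close> by auto
  have *: "\<bar>k (t - s) * f s\<bar> \<le> B * c" if "s \<in> {0..t}" for s
    using k[of "t - s"] f[of s] that by (simp add: abs_mult mult_mono')
  show ?thesis
  proof (cases "(\<lambda>s. k (t - s) * f s) integrable_on {0..t}")
    case True
    then have "norm (integral {0..t} (\<lambda>s. k (t - s) * f s)) \<le> B * c * measure lborel (cbox 0 t)"
      using \<open>B \<ge> 0\<close> \<open>c \<ge> 0\<close> *
      by (intro has_integral_bound[where f = "\<lambda>s. k (t - s) * f s"]) (auto simp: integrable_integral)
    then show ?thesis
      using \<open>t \<ge> 0\<close> by simp
  next
    case False
    then show ?thesis
      using \<open>B \<ge> 0\<close> \<open>c \<ge> 0\<close> \<open>t \<ge> 0\<close> by (simp add: not_integrable_integral)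
  qed
qed

lemma integral_reflect_Icc_real:
  fixes k :: "real \<Rightarrow> real"
  shows "integral {0..T} (\<lambda>u. k (T - u)) = integral {0..T} k"
proof -
  have "integral {0..T} (\<lambda>u. k (T - u)) = integral {-T..0} (\<lambda>x. k (T + x))"
    using Henstock_Kurzweil_Integration.integral_reflect_real[of 0 "-T" "\<lambda>x. k (T + x)"] by simp
  also have "\<dots> = integral {0..T} k"
    using integral_shift_Icc_real[of "-T" 0 k T] by (simp add: o_def add.commute)
  finally show ?thesis .
qed

lemma integral_convolution_less:
  fixes k f :: "real \<Rightarrow> real"
  assumes "T > 0"
    and k_cont: "continuous_on {0..T} k" and f_cont: "continuous_on {0..T} f"
    and k_nonneg: "\<And>x. x \<in> {0..T} \<Longrightarrow> 0 \<le> k x" and "k T > 0"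
    and k_mass: "integral {0..T} k \<le> 1"
    and "f T \<ge> 0" and f_less: "\<And>u. u \<in> {0..<T} \<Longrightarrow> f u < f T"
  shows "integral {0..T} (\<lambda>u. k (T - u) * f u) < f T"
proof -
  define q where "q u = k (T - u) * (f T - f u)" for u
  have k_refl_cont: "continuous_on {0..T} (\<lambda>u. k (T - u))"
    by (intro continuous_on_compose2[OF k_cont] continuous_intros) auto
  have q_cont: "continuous_on {0..T} q"
    unfolding q_def using k_refl_cont f_cont by (intro continuous_intros)
  have q_nonneg: "0 \<le> q u" if "u \<in> {0..T}" for u
    using k_nonneg[of "T - u"] f_less[of u] that
    by (cases "u = T") (auto simp: q_def)
  have "q 0 > 0"
    using \<open>k T > 0\<close> f_less[of 0] \<open>T > 0\<close> by (simp add: q_def)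
  have q_int: "(q has_integral integral {0..T} q) {0..T}"
    using integrable_continuous_interval[OF q_cont] by (simp add: integrable_integral)
  have "integral {0..T} q \<noteq> 0"
  proof
    assume "integral {0..T} q = 0"
    then have "q 0 = 0"
      using q_cont q_nonneg \<open>T > 0\<close> q_int
      by (intro has_integral_0_cbox_imp_0[of 0 T q 0]) (auto simp: box_real)
    with \<open>q 0 > 0\<close> show False
      by simp
  qed
  moreover have "integral {0..T} q \<ge> 0"
    by (rule has_integral_nonneg[OF q_int q_nonneg])
  ultimately have "integral {0..T} q > 0"
    by simp
  have "integral {0..T} (\<lambda>u. k (T - u) * f u) = integral {0..T} (\<lambda>u. f T * k (T - u) - q u)"
    by (rule integral_cong) (simp add: q_def algebra_simps)
  also have "\<dots> = f T * integral {0..T} k - integral {0..T} q"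
    using k_refl_cont q_cont
    by (subst integral_diff) (auto intro!: integrable_continuous_interval continuous_intros
        simp: integral_reflect_Icc_real)
  also have "\<dots> < f T"
    using mult_left_le[OF k_mass \<open>f T \<ge> 0\<close>] \<open>integral {0..T} q > 0\<close> by linarith
  finally show ?thesis .
qed

lemma continuous_on_Icc_abs_bound:
  fixes f :: "real \<Rightarrow> real"
  assumes "continuous_on {a..b} f"
  obtains B where "\<And>x. x \<in> {a..b} \<Longrightarrow> \<bar>f x\<bar> \<le> B"
proof -
  obtain B where "\<forall>y \<in> f ` {a..b}. norm y \<le> B"
    using compact_imp_bounded[OF compact_continuous_image[OF assms compact_Icc]] bounded_iff by metis
  then show ?thesis
    by (intro that) auto
qed

locale infection_ode =
  fixes M \<beta> :: real and g I I' :: "real \<Rightarrow> real"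
  assumes \<beta>_pos: "\<beta> > 0"
    and g_cont: "continuous_on {0..} g"
    and g_nonneg: "\<And>t. t \<ge> 0 \<Longrightarrow> 0 \<le> g t"
    and g_pos: "\<And>t. t > 0 \<Longrightarrow> 0 < g t"
    and g_mass: "\<And>T. T \<ge> 0 \<Longrightarrow> integral {0..T} g \<le> 1"
    and deriv: "\<And>t. t \<ge> 0 \<Longrightarrow> (I has_real_derivative I' t) (at t within {0..})"
    and I'_cont: "continuous_on {0..} I'"
    and ode: "\<And>t. t \<ge> 0 \<Longrightarrow>
       I' t = \<beta> * (M - I t) * (I t - integral {0..t} (\<lambda>s. g (t - s) * I s))"
begin

definition infectious :: "real \<Rightarrow> real" where
  "infectious t = I t - integral {0..t} (\<lambda>s. g (t - s) * I s)"

lemma ode_infectious: "t \<ge> 0 \<Longrightarrow> I' t = \<beta> * (M - I t) * infectious t"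
  by (simp add: ode infectious_def)

lemma I_cont: "continuous_on {0..} I"
  using deriv by (intro DERIV_continuous_on) simp

lemma deriv_Icc: "t \<in> {0..T} \<Longrightarrow> (I has_real_derivative I' t) (at t within {0..T})"
  by (rule DERIV_subset[OF deriv]) auto

lemma deriv_at: "t > 0 \<Longrightarrow> (I has_real_derivative I' t) (at t)"
  using deriv[of t] at_within_interior[of t "{0..}"] by simp

lemma abs_infectious_le:
  assumes "t \<ge> 0" "T \<ge> t"
    and g_le: "\<And>x. x \<in> {0..T} \<Longrightarrow> g x \<le> B"
    and I_le: "\<And>u. u \<in> {0..t} \<Longrightarrow> \<bar>I u\<bar> \<le> c"
  shows "\<bar>infectious t\<bar> \<le> c * (1 + B * T)"
proof -
  have "\<bar>integral {0..t} (\<lambda>s. g (t - s) * I s)\<bar> \<le> B * c * t"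
    using assms g_nonneg by (intro abs_integral_convolution_le) auto
  also have "\<dots> \<le> B * c * T"
  proof -
    have "0 \<in> {0..T}" "0 \<in> {0..t}"
      using assms by auto
    then have "B \<ge> 0" "c \<ge> 0"
      using g_nonneg[of 0] g_le I_le by force+
    then show ?thesis
      using assms by (intro mult_left_mono) auto
  qed
  finally show ?thesis
    using I_le[of t] \<open>t \<ge> 0\<close> by (simp add: infectious_def algebra_simps)
qed

lemma g_I_bounded:
  assumes "T \<ge> 0"
  obtains B K where "\<And>x. x \<in> {0..T} \<Longrightarrow> g x \<le> B" and "\<And>x. x \<in> {0..T} \<Longrightarrow> \<bar>I x\<bar> \<le> K"
proof -
  have "continuous_on {0..T} g"
    by (rule continuous_on_subset[OF g_cont]) auto
  then obtain B where "\<And>x. x \<in> {0..T} \<Longrightarrow> \<bar>g x\<bar> \<le> B"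
    by (rule continuous_on_Icc_abs_bound) blast
  moreover have "continuous_on {0..T} I"
    by (rule continuous_on_subset[OF I_cont]) auto
  then obtain K where "\<And>x. x \<in> {0..T} \<Longrightarrow> \<bar>I x\<bar> \<le> K"
    by (rule continuous_on_Icc_abs_bound) blast
  ultimately show ?thesis
    using that by (meson abs_le_D1)
qed

lemma infectious_bounded:
  assumes "T \<ge> 0"
  obtains H where "\<And>t. t \<in> {0..T} \<Longrightarrow> \<bar>infectious t\<bar> \<le> H"
proof -
  obtain B K where "\<And>x. x \<in> {0..T} \<Longrightarrow> g x \<le> B" "\<And>x. x \<in> {0..T} \<Longrightarrow> \<bar>I x\<bar> \<le> K"
    using g_I_bounded[OF assms] by blast
  then have "\<bar>infectious t\<bar> \<le> K * (1 + B * T)" if "t \<in> {0..T}" for t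
    using that by (intro abs_infectious_le) auto
  then show ?thesis
    using that by blast
qed

lemma abs_I'_le:
  assumes "t \<ge> 0" "\<bar>infectious t\<bar> \<le> H"
  shows "\<bar>I' t\<bar> \<le> \<beta> * H * \<bar>M - I t\<bar>"
proof -
  have "\<bar>I' t\<bar> = \<beta> * \<bar>M - I t\<bar> * \<bar>infectious t\<bar>"
    using assms \<beta>_pos by (simp add: ode_infectious abs_mult)
  also have "\<dots> \<le> \<beta> * \<bar>M - I t\<bar> * H"
    using assms \<beta>_pos by (intro mult_left_mono) auto
  finally show ?thesis
    by (simp add: mult_ac)
qed

lemma I_eq_0:
  assumes "I 0 = 0" "t \<ge> 0"
  shows "I t = 0"
proof -
  obtain B K where g_le: "\<And>x. x \<in> {0..t} \<Longrightarrow> g x \<le> B" and I_le: "\<And>x. x \<in> {0..t} \<Longrightarrow> \<bar>I x\<bar> \<le> K"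
    using g_I_bounded[OF \<open>t \<ge> 0\<close>] by blast
  have "B \<ge> 0" "K \<ge> 0"
    using g_nonneg[of 0] g_le[of 0] I_le[of 0] \<open>t \<ge> 0\<close> by auto
  show ?thesis
  proof (rule volterra_zero[OF \<open>t \<ge> 0\<close> _ deriv_Icc])
    show "0 \<le> \<beta> * (\<bar>M\<bar> + K) * (1 + B * t)"
      using \<beta>_pos \<open>B \<ge> 0\<close> \<open>K \<ge> 0\<close> \<open>t \<ge> 0\<close> by simp
    show "\<bar>I' s\<bar> \<le> \<beta> * (\<bar>M\<bar> + K) * (1 + B * t) * c"
      if s: "s \<in> {0..t}" and c: "\<And>u. u \<in> {0..s} \<Longrightarrow> \<bar>I u\<bar> \<le> c" for s c
    proof -
      have "\<bar>infectious s\<bar> \<le> c * (1 + B * t)"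
        using s c by (intro abs_infectious_le g_le) auto
      then have "\<bar>I' s\<bar> \<le> \<beta> * (c * (1 + B * t)) * \<bar>M - I s\<bar>"
        using s by (intro abs_I'_le) auto
      also have "\<dots> \<le> \<beta> * (c * (1 + B * t)) * (\<bar>M\<bar> + K)"
        using s c[of s] I_le[of s] \<beta>_pos \<open>B \<ge> 0\<close> \<open>t \<ge> 0\<close>
        by (intro mult_left_mono) auto
      finally show ?thesis
        by (simp add: mult_ac)
    qed
  qed (use assms in auto)
qed

lemma I_eq_M:
  assumes "I 0 = M" "t \<ge> 0"
  shows "I t = M"
proof -
  obtain H where H: "\<And>s. s \<in> {0..t} \<Longrightarrow> \<bar>infectious s\<bar> \<le> H"
    using infectious_bounded[OF \<open>t \<ge> 0\<close>] by blast
  have "0 \<le> \<beta> * H"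
    using \<beta>_pos H[of 0] \<open>t \<ge> 0\<close> by simp
  have "M - I t = 0"
  proof (rule volterra_zero[where J' = "\<lambda>s. - I' s", OF \<open>t \<ge> 0\<close> \<open>0 \<le> \<beta> * H\<close>])
    show "((\<lambda>s. M - I s) has_real_derivative - I' s) (at s within {0..t})" if "s \<in> {0..t}" for s
      using deriv_Icc[OF that] by (auto intro!: derivative_eq_intros)
    show "\<bar>- I' s\<bar> \<le> \<beta> * H * c"
      if s: "s \<in> {0..t}" and c: "\<And>u. u \<in> {0..s} \<Longrightarrow> \<bar>M - I u\<bar> \<le> c" for s c
    proof -
      have "\<bar>I' s\<bar> \<le> \<beta> * H * \<bar>M - I s\<bar>"
        using s by (intro abs_I'_le H) auto
      also have "\<dots> \<le> \<beta> * H * c"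
        using c[of s] s \<open>0 \<le> \<beta> * H\<close> by (intro mult_left_mono) auto
      finally show ?thesis
        by simp
    qed
  qed (use \<open>I 0 = M\<close> in simp)
  then show ?thesis
    by simp
qed

lemma I_less_M:
  assumes "I 0 < M" "t \<ge> 0"
  shows "I t < M"
proof -
  have "M - I s \<noteq> 0" if "s \<ge> 0" for s
  proof -
    obtain H where H: "\<And>u. u \<in> {0..s} \<Longrightarrow> \<bar>infectious u\<bar> \<le> H"
      using infectious_bounded[OF \<open>s \<ge> 0\<close>] by blast
    show ?thesis
    proof (rule has_real_derivative_nonzero_persists[where J' = "\<lambda>s. - I' s" and L = "\<beta> * H", OF \<open>s \<ge> 0\<close>])
      show "0 \<le> \<beta> * H"
        using \<beta>_pos H[of 0] \<open>s \<ge> 0\<close> by simp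
      show "((\<lambda>s. M - I s) has_real_derivative - I' u) (at u within {0..s})" if "u \<in> {0..s}" for u
        using deriv_Icc[OF that] by (auto intro!: derivative_eq_intros)
      show "\<bar>- I' u\<bar> \<le> \<beta> * H * \<bar>M - I u\<bar>" if "u \<in> {0..s}" for u
        using abs_I'_le[of u H] H[OF that] that by simp
    qed (use \<open>I 0 < M\<close> in simp)
  qed
  moreover have "continuous_on {0..t} I"
    by (rule continuous_on_subset[OF I_cont]) auto
  ultimately show ?thesis
    using IVT'[of I 0 M t] assms by force
qed

lemma infectious_continuous:
  assumes "I 0 < M"
  shows "continuous_on {0..} infectious"
proof -
  \<comment> \<open>Continuity of the convolution term comes for free from the ODE, as M - I never vanishes.\<close>
  have "continuous_on {0..} (\<lambda>s. I' s / (\<beta> * (M - I s)))"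
    using I'_cont I_cont I_less_M[OF assms] \<beta>_pos by (intro continuous_intros) force+
  then show ?thesis
    by (rule continuous_on_eq)
       (use I_less_M[OF assms] \<beta>_pos in \<open>auto simp: ode_infectious\<close>)
qed

lemma infectious_pos:
  assumes "0 < I 0" "I 0 < M" "t \<ge> 0"
  shows "infectious t > 0"
proof (rule continuous_pos_induct[OF infectious_continuous[OF \<open>I 0 < M\<close>] _ _ \<open>t \<ge> 0\<close>])
  show "infectious 0 > 0"
    using \<open>0 < I 0\<close> by (simp add: infectious_def)
next
  fix T :: real
  assume "T > 0" and pos: "\<And>s. 0 \<le> s \<Longrightarrow> s < T \<Longrightarrow> infectious s > 0"
  have I'_pos: "I' s > 0" if "0 \<le> s" "s < T" for s
    using ode_infectious[of s] pos[OF that] I_less_M[of s] \<beta>_pos assms that by simp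
  have I_less: "I u < I T" if "u \<in> {0..<T}" for u
  proof (rule DERIV_pos_imp_increasing_open[of u T I])
    show "continuous_on {u..T} I"
      by (rule continuous_on_subset[OF I_cont]) (use that in auto)
    show "\<exists>y. (I has_real_derivative y) (at x) \<and> 0 < y" if "u < x" "x < T" for x
      using deriv_at[of x] I'_pos[of x] \<open>u \<in> {0..<T}\<close> that by auto
  qed (use that in auto)
  show "infectious T > 0"
  proof -
    have "integral {0..T} (\<lambda>u. g (T - u) * I u) < I T"
    proof (rule integral_convolution_less[OF \<open>T > 0\<close>])
      show "continuous_on {0..T} g" "continuous_on {0..T} I"
        by (auto intro: continuous_on_subset[OF g_cont] continuous_on_subset[OF I_cont])
      show "I T \<ge> 0"
        using I_less[of 0] \<open>T > 0\<close> \<open>0 < I 0\<close> by simp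
    qed (use I_less g_nonneg g_pos g_mass \<open>T > 0\<close> in auto)
    then show ?thesis
      by (simp add: infectious_def)
  qed
qed

lemma I'_pos:
  assumes "0 < I 0" "I 0 < M" "t \<ge> 0"
  shows "I' t > 0"
  using ode_infectious[of t] infectious_pos[OF assms] I_less_M[of t] assms \<beta>_pos by simp

lemma I'_eq_0:
  assumes "I 0 = 0 \<or> I 0 = M" "t \<ge> 0"
  shows "I' t = 0"
  using assms(1)
proof
  assume "I 0 = 0"
  then have "integral {0..t} (\<lambda>s. g (t - s) * I s) = integral {0..t} (\<lambda>_. 0)"
    by (intro integral_cong) (simp add: I_eq_0)
  then have "infectious t = 0"
    using I_eq_0 \<open>I 0 = 0\<close> \<open>t \<ge> 0\<close> by (simp add: infectious_def)
  then show ?thesis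
    by (simp add: ode_infectious \<open>t \<ge> 0\<close>)
next
  assume "I 0 = M"
  then show ?thesis
    using I_eq_M \<open>t \<ge> 0\<close> by (simp add: ode_infectious)
qed

end

lemma lognormal_density_nonneg: "\<sigma> > 0 \<Longrightarrow> 0 \<le> lognormal_density \<mu> \<sigma> t"
  by (auto simp: lognormal_density_def)

lemma lognormal_density_pos: "\<sigma> > 0 \<Longrightarrow> t > 0 \<Longrightarrow> 0 < lognormal_density \<mu> \<sigma> t"
  by (auto simp: lognormal_density_def)

lemma lognormal_density_eq_normal_density:
  "\<sigma> > 0 \<Longrightarrow> t > 0 \<Longrightarrow> lognormal_density \<mu> \<sigma> t = normal_density \<mu> \<sigma> (ln t) / t"
  by (simp add: lognormal_density_def normal_density_def real_sqrt_mult)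

lemma continuous_on_lognormal_density:
  assumes "\<sigma> > 0"
  shows "continuous_on A (lognormal_density \<mu> \<sigma>)"
proof -
  let ?f = "\<lambda>t. (1 / (t * \<sigma> * sqrt (2 * pi))) * exp (- ((ln t - \<mu>)^2) / (2 * \<sigma>^2))"
  have "isCont (lognormal_density \<mu> \<sigma>) t" for t
  proof (cases t "0::real" rule: linorder_cases)
    case less
    have "\<forall>\<^sub>F x in nhds t. lognormal_density \<mu> \<sigma> x = 0"
      using eventually_nhds_in_open[of "{..<0}" t] less
      by (simp add: eventually_mono lognormal_density_def)
    then show ?thesis
      by (simp add: isCont_cong)
  next
    case greater
    have "\<forall>\<^sub>F x in nhds t. lognormal_density \<mu> \<sigma> x = ?f x"
      using eventually_nhds_in_open[of "{0<..}" t] greater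
      by (simp add: eventually_mono lognormal_density_def)
    moreover have "isCont ?f t"
      using assms greater by (intro continuous_intros) auto
    ultimately show ?thesis
      by (simp add: isCont_cong)
  next
    case equal
    have "(?f \<longlongrightarrow> 0) (at_right 0)"
      using assms by real_asymp
    then have right: "(lognormal_density \<mu> \<sigma> \<longlongrightarrow> 0) (at_right 0)"
      by (rule Lim_transform_eventually)
         (auto simp: eventually_at_right_field lognormal_density_def intro!: exI[of _ 1])
    have left: "(lognormal_density \<mu> \<sigma> \<longlongrightarrow> 0) (at_left 0)"
      by (rule Lim_transform_eventually[OF tendsto_const])
         (auto simp: eventually_at_left_field lognormal_density_def intro!: exI[of _ "-1"])
    show ?thesis
      using filterlim_split_at[OF left right] equal by (simp add: isCont_def lognormal_density_def)
  qed
  then show ?thesis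
    by (simp add: continuous_at_imp_continuous_on)
qed

lemma integral_lognormal_density_le_1:
  assumes "\<sigma> > 0" and "T \<ge> 0"
  shows "integral {0..T} (lognormal_density \<mu> \<sigma>) \<le> 1"
proof (cases "T = 0")
  case False
  let ?g = "lognormal_density \<mu> \<sigma>" and ?\<phi> = "normal_density \<mu> \<sigma>"
  have \<phi>_cont: "continuous_on S ?\<phi>" for S
    unfolding normal_density_def using assms by (intro continuous_intros) auto
  have \<phi>_UNIV: "(?\<phi> has_integral 1) UNIV"
    using has_integral_integral_lborel[OF integrable_normal_density[OF assms(1)]] assms by simp
  have tail: "integral {a..T} ?g \<le> 1" if a: "a \<in> {0<..T}" for a
  proof -
    have "((\<lambda>x. (1/x) *\<^sub>R ?\<phi> (ln x)) has_integral integral {ln a..ln T} ?\<phi>) {a..T}"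
      using a \<phi>_cont
      by (intro has_integral_substitution[where g = ln and g' = "\<lambda>x. 1/x" and c = "ln a" and d = "ln T"])
         (auto intro!: DERIV_subset[OF DERIV_ln_divide])
    then have "(?g has_integral integral {ln a..ln T} ?\<phi>) {a..T}"
      by (rule has_integral_eq[rotated]) (use a assms in \<open>simp add: lognormal_density_eq_normal_density\<close>)
    then have "integral {a..T} ?g = integral {ln a..ln T} ?\<phi>"
      by (rule integral_unique)
    also have "\<dots> \<le> integral UNIV ?\<phi>"
      using \<phi>_UNIV by (intro integral_subset_le) (auto intro: integrable_continuous_interval \<phi>_cont)
    also have "\<dots> = 1"
      using \<phi>_UNIV by (rule integral_unique)
    finally show ?thesis .
  qed
  have "continuous_on {0..T} (\<lambda>a. integral {a..T} ?g)"
    using continuous_on_lognormal_density[OF assms(1)]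
    by (intro indefinite_integral_continuous_1' integrable_continuous_interval)
  then show ?thesis
    using continuous_le_on_closure[of "{0<..T}" "\<lambda>a. integral {a..T} ?g" 0 1] tail False assms(2)
    by simp
qed simp

theorem proposition3p4:
  fixes M \<beta> \<mu> \<sigma> I0 :: real and I I' :: "real \<Rightarrow> real"
  assumes "M > 0" and "\<beta> > 0" and "\<sigma> > 0"
    and "0 \<le> I0" and "I0 \<le> M"
    and deriv: "\<And>t. t \<ge> 0 \<Longrightarrow> (I has_real_derivative I' t) (at t within {0..})"
    and cont: "continuous_on {0..} I'"
    and ode: "\<And>t. t \<ge> 0 \<Longrightarrow>
       I' t = \<beta> * (M - I t) *
              (I t - integral {0..t} (\<lambda>s. lognormal_density \<mu> \<sigma> (t - s) * I s))"
    and init: "I 0 = I0"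
  shows "(0 < I0 \<and> I0 < M \<longrightarrow> (\<forall>t\<ge>0. I' t > 0))
       \<and> (I0 = 0 \<or> I0 = M \<longrightarrow> (\<forall>t\<ge>0. I' t = 0))"
proof -
  interpret infection_ode M \<beta> "lognormal_density \<mu> \<sigma>" I I'
    by unfold_locales
       (use assms in \<open>auto simp: continuous_on_lognormal_density lognormal_density_nonneg
          lognormal_density_pos integral_lognormal_density_le_1\<close>)
  show ?thesis
    using I'_pos I'_eq_0 init by auto
qed

end
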